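(* Let $\bar g$ be a two-dimensional Lorentzian metric and $\psi$ a smooth function such that $d\psi$ is a non-null conformal Killing one-form of $\bar g$, and let $(x,t)$ be local coordinates in which $\psi=\psi(x)$ and $\bar g=\psi'(x)\,(dx^2-dt^2)$. Let $F_1,F_2$ be functions of $x$ only such that $F_1\,dF_2$ is also a non-null conformal Killing one-form of $\bar g$. Then there is a constant $\tilde k$ such that \[ F_1\,dF_2=\tilde k\, d\psi. \]
   Context: A one-form $\omega$ on a pseudo-Riemannian manifold $(M,\bar g)$ is called a conformal Killing one-form if its metric dual vector field $X=\bar g^{-1}(\omega)$ is a conformal Killing vector field, i.e. $\mathcal{L}_X\bar g=\lambda\,\bar g$ for some function $\lambda$. Non-null means $\bar g^{-1}(\omega,\omega)\neq0$. *)

theory Defs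
  imports "HOL-Analysis.Analysis"
begin

text \<open>Coordinates on the surface: a point p :: real^2 has x = p$1 and t = p$2.
  One-forms and vector fields are given by their component vectors in these coordinates,
  a (0,2)-tensor field (metric) by its component matrix.\<close>

definition pd :: "(real^2 \<Rightarrow> real) \<Rightarrow> 2 \<Rightarrow> real^2 \<Rightarrow> real" where
  "pd f i p = frechet_derivative f (at p) (axis i 1)"

definition dform :: "(real^2 \<Rightarrow> real) \<Rightarrow> real^2 \<Rightarrow> real^2" where
  "dform f p = (\<chi> i. pd f i p)"

definition raise :: "(real^2 \<Rightarrow> real^2^2) \<Rightarrow> (real^2 \<Rightarrow> real^2) \<Rightarrow> real^2 \<Rightarrow> real^2" where
  "raise g \<omega> p = matrix_inv (g p) *v \<omega> p"

definition lie_metric :: "(real^2 \<Rightarrow> real^2) \<Rightarrow> (real^2 \<Rightarrow> real^2^2) \<Rightarrow> real^2 \<Rightarrow> real^2^2" where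
  "lie_metric X g p = (\<chi> i j. \<Sum>k\<in>UNIV.
      X p $ k * pd (\<lambda>q. g q $ i $ j) k p
    + g p $ k $ j * pd (\<lambda>q. X q $ k) i p
    + g p $ i $ k * pd (\<lambda>q. X q $ k) j p)"

definition conformal_killing_vf :: "(real^2) set \<Rightarrow> (real^2 \<Rightarrow> real^2^2) \<Rightarrow> (real^2 \<Rightarrow> real^2) \<Rightarrow> bool" where
  "conformal_killing_vf U g X \<longleftrightarrow>
     (\<forall>p\<in>U. X differentiable (at p)) \<and>
     (\<exists>c::real^2 \<Rightarrow> real. \<forall>p\<in>U. lie_metric X g p = c p *\<^sub>R g p)"

definition conformal_killing_form :: "(real^2) set \<Rightarrow> (real^2 \<Rightarrow> real^2^2) \<Rightarrow> (real^2 \<Rightarrow> real^2) \<Rightarrow> bool" where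
  "conformal_killing_form U g \<omega> \<longleftrightarrow> conformal_killing_vf U g (raise g \<omega>)"

definition non_null :: "(real^2) set \<Rightarrow> (real^2 \<Rightarrow> real^2^2) \<Rightarrow> (real^2 \<Rightarrow> real^2) \<Rightarrow> bool" where
  "non_null U g \<omega> \<longleftrightarrow> (\<forall>p\<in>U. \<omega> p \<bullet> raise g \<omega> p \<noteq> 0)"

definition smooth_real_on :: "real set \<Rightarrow> (real \<Rightarrow> real) \<Rightarrow> bool" where
  "smooth_real_on S f \<longleftrightarrow> (\<forall>n. \<forall>x\<in>S. ((deriv ^^ n) f) differentiable (at x))"

definition coord_metric :: "(real \<Rightarrow> real) \<Rightarrow> real^2 \<Rightarrow> real^2^2" where
  "coord_metric \<psi> p = (\<chi> i j. if i = j then (if i = 1 then deriv \<psi> (p$1) else - deriv \<psi> (p$1)) else 0)"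

end

theory Submission
  imports Defs
begin

text \<open>In the coordinates (x,t) every one-form F1 dF2 is w(x) dx with w = F1 F2', and its dual
  vector field for the metric a(x) (dx^2 - dt^2), a = \<psi>', is h(x) \<partial>_x with h = w/a.
  The xx- and tt-components of L_X g = c g read h a' + 2 a h' = c a and - h a' = - c a;
  adding them gives a h' = 0, so h is constant on the connected domain, i.e. w = k a.\<close>

lemma matrix_inv_unique:
  fixes A B :: "'a::comm_semiring_1^'n^'n"
  assumes "A ** B = mat 1" and "B ** A = mat 1"
  shows "matrix_inv A = B"
proof -
  have "C = B" if "A ** C = mat 1 \<and> C ** A = mat 1" for C
  proof -
    have "C = (B ** A) ** C" using assms(2) by simp
    also have "\<dots> = B ** (A ** C)" by (simp add: matrix_mul_assoc)
    finally show ?thesis using that by simp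
  qed
  then show ?thesis
    unfolding matrix_inv_def using assms by (metis (mono_tags, lifting) someI_ex)
qed

definition lorentz_diag :: "real \<Rightarrow> real^2^2" where
  "lorentz_diag a = (\<chi> i j. if i = j then (if i = 1 then a else - a) else 0)"

lemma coord_metric_eq_lorentz_diag: "coord_metric \<psi> p = lorentz_diag (deriv \<psi> (p$1))"
  by (simp add: coord_metric_def lorentz_diag_def)

lemma matrix_inv_lorentz_diag:
  assumes "a \<noteq> 0"
  shows "matrix_inv (lorentz_diag a) = lorentz_diag (1 / a)"
  using assms
  by (intro matrix_inv_unique)
     (simp_all add: lorentz_diag_def matrix_matrix_mult_def mat_def vec_eq_iff forall_2 sum_2)

lemma raise_coord_metric:
  assumes "deriv \<psi> (p$1) \<noteq> 0"
  shows "raise (coord_metric \<psi>) \<omega> p =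
    (\<chi> i. if i = 1 then \<omega> p $ 1 / deriv \<psi> (p$1) else - \<omega> p $ 2 / deriv \<psi> (p$1))"
  using assms unfolding raise_def coord_metric_eq_lorentz_diag matrix_inv_lorentz_diag[OF assms]
  by (simp add: matrix_vector_mult_def lorentz_diag_def vec_eq_iff forall_2 sum_2)

lemma has_derivative_vec_nth_comp:
  fixes p :: "real^'n"
  assumes "(f has_real_derivative D) (at (p$i))"
  shows "((\<lambda>q. f (q$i)) has_derivative (\<lambda>v. D * v$i)) (at p)"
  using has_derivative_compose[OF bounded_linear_imp_has_derivative[OF bounded_linear_vec_nth]
      assms[unfolded has_field_derivative_def]]
  by (simp add: o_def mult.commute)

lemma pd_eq_first_coord:
  assumes "open U" and "p \<in> U" and "\<forall>q\<in>U. g q = f (q$1)"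
    and "(f has_real_derivative D) (at (p$1))"
  shows "pd g i p = (if i = 1 then D else 0)"
proof -
  have "(g has_derivative (\<lambda>v. D * v$1)) (at p)"
    using has_derivative_transform_within_open[OF has_derivative_vec_nth_comp[OF assms(4)]
        assms(1,2)] assms(3) by simp
  then have "pd g i p = D * (axis i 1 :: real^2) $ 1"
    unfolding pd_def by (metis frechet_derivative_at)
  then show ?thesis by (simp add: axis_def)
qed

lemma dform_first_coord:
  assumes "f differentiable (at (p$1))"
  shows "dform (\<lambda>q. f (q$1)) p = (\<chi> i. if i = 1 then deriv f (p$1) else 0)"
  using pd_eq_first_coord[of UNIV, OF _ _ _ DERIV_deriv_iff_real_differentiable[THEN iffD2, OF assms]]
  by (simp add: dform_def)

lemma lie_metric_coord_metric_first_coord_field: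
  assumes "open U" and "p \<in> U"
    and X: "\<forall>q\<in>U. X q = (\<chi> i. if i = 1 then h (q$1) else 0)"
    and h: "(h has_real_derivative h') (at (p$1))"
    and a: "(deriv \<psi> has_real_derivative a') (at (p$1))"
  shows "lie_metric X (coord_metric \<psi>) p = (\<chi> i j. if i = j then
           (if i = 1 then h (p$1) * a' + 2 * deriv \<psi> (p$1) * h' else - h (p$1) * a') else 0)"
proof -
  have pdX1: "pd (\<lambda>q. X q $ 1) i p = (if i = 1 then h' else 0)" for i
    using pd_eq_first_coord[OF assms(1,2) _ h] X by simp
  have pdX2: "pd (\<lambda>q. X q $ 2) i p = 0" for i
    using pd_eq_first_coord[OF assms(1,2), of _ "\<lambda>_. 0" 0] X by simp
  have pd_a: "pd (\<lambda>q. deriv \<psi> (q$1)) 1 p = a'"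
    using pd_eq_first_coord[of UNIV, OF _ _ _ a] by simp
  have pd_minus_a: "pd (\<lambda>q. - deriv \<psi> (q$1)) 1 p = - a'"
    using pd_eq_first_coord[of UNIV, OF _ _ _ DERIV_minus[OF a]] by simp
  have pd_zero: "pd (\<lambda>q. 0) i p = 0" for i
    using pd_eq_first_coord[of UNIV _ _ "\<lambda>_. 0" 0] by simp
  show ?thesis
    using X assms(2)
    by (simp add: lie_metric_def vec_eq_iff forall_2 sum_2 pdX1 pdX2 pd_a pd_minus_a pd_zero
        coord_metric_def)
qed

lemma has_real_derivative_zero_vec_nth_constant:
  fixes U :: "(real^'n) set"
  assumes "open U" and "connected U"
    and "\<forall>p\<in>U. (h has_real_derivative 0) (at (p$i))"
    and "p \<in> U" and "q \<in> U"
  shows "h (p$i) = h (q$i)"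
  using has_derivative_zero_unique_connected[OF assms(1,2) _ assms(4,5), of "\<lambda>q. h (q$i)"]
    has_derivative_vec_nth_comp assms(3) by fastforce

lemma conformal_killing_first_coord_form_proportional:
  assumes "open U" and "connected U"
    and a_nonzero: "\<forall>p\<in>U. deriv \<psi> (p$1) \<noteq> 0"
    and a_diff: "\<forall>p\<in>U. deriv \<psi> differentiable (at (p$1))"
    and w_diff: "\<forall>p\<in>U. w differentiable (at (p$1))"
    and \<omega>: "\<forall>p\<in>U. \<omega> p = (\<chi> i. if i = 1 then w (p$1) else 0)"
    and "conformal_killing_form U (coord_metric \<psi>) \<omega>"
  shows "\<exists>k. \<forall>p\<in>U. w (p$1) = k * deriv \<psi> (p$1)"
proof (cases "U = {}")
  case False
  then obtain p0 where p0: "p0 \<in> U" by blast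
  define h where "h x = w x / deriv \<psi> x" for x
  have X: "\<forall>q\<in>U. raise (coord_metric \<psi>) \<omega> q = (\<chi> i. if i = 1 then h (q$1) else 0)"
    using a_nonzero \<omega> by (simp add: raise_coord_metric h_def vec_eq_iff forall_2)
  obtain c where c: "\<forall>p\<in>U. lie_metric (raise (coord_metric \<psi>) \<omega>) (coord_metric \<psi>) p
                              = c p *\<^sub>R coord_metric \<psi> p"
    using assms(7) unfolding conformal_killing_form_def conformal_killing_vf_def by blast
  have "(h has_real_derivative 0) (at (p$1))" if p: "p \<in> U" for p
  proof -
    have h_diff: "h differentiable (at (p$1))"
      unfolding h_def[abs_def] using p a_nonzero a_diff w_diff by (intro differentiable_divide) auto
    obtain h' where h': "(h has_real_derivative h') (at (p$1))"
      using h_diff real_differentiable_def by blast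
    obtain a' where a': "(deriv \<psi> has_real_derivative a') (at (p$1))"
      using p a_diff real_differentiable_def by blast
    have "h (p$1) * a' + 2 * deriv \<psi> (p$1) * h' = c p * deriv \<psi> (p$1)"
      and "- h (p$1) * a' = - c p * deriv \<psi> (p$1)"
      using arg_cong[OF c[rule_format, OF p], of "\<lambda>M. M $ 1 $ 1"]
        arg_cong[OF c[rule_format, OF p], of "\<lambda>M. M $ 2 $ 2"]
      by (simp_all add: lie_metric_coord_metric_first_coord_field[OF assms(1) p X h' a']
          coord_metric_def)
    then have "deriv \<psi> (p$1) * h' = 0" by linarith
    then show ?thesis using h' p a_nonzero by simp
  qed
  then have h_const: "h (p$1) = h (p0$1)" if "p \<in> U" for p
    using has_real_derivative_zero_vec_nth_constant[OF assms(1,2) _ that p0] by blast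
  show ?thesis
  proof (intro exI ballI)
    fix p assume p: "p \<in> U"
    then have "w (p$1) / deriv \<psi> (p$1) = h (p0$1)"
      using h_const unfolding h_def by blast
    then show "w (p$1) = h (p0$1) * deriv \<psi> (p$1)"
      using a_nonzero p by (simp add: divide_eq_eq)
  qed
qed simp

lemma smooth_real_on_imp_differentiable:
  "smooth_real_on S f \<Longrightarrow> x \<in> S \<Longrightarrow> f differentiable (at x)"
  unfolding smooth_real_on_def by (erule allE[of _ 0]) simp

lemma smooth_real_on_imp_deriv_differentiable:
  "smooth_real_on S f \<Longrightarrow> x \<in> S \<Longrightarrow> deriv f differentiable (at x)"
  unfolding smooth_real_on_def by (erule allE[of _ 1]) simp

theorem proposition2:
  fixes \<psi> F1 F2 :: "real \<Rightarrow> real" and U :: "(real^2) set"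
  assumes "open U" and "connected U"
    and "smooth_real_on ((\<lambda>p. p$1) ` U) \<psi>"
    and "smooth_real_on ((\<lambda>p. p$1) ` U) F1"
    and "smooth_real_on ((\<lambda>p. p$1) ` U) F2"
    and "\<forall>p\<in>U. deriv \<psi> (p$1) \<noteq> 0"
    and "conformal_killing_form U (coord_metric \<psi>) (dform (\<lambda>q. \<psi> (q$1)))"
    and "non_null U (coord_metric \<psi>) (dform (\<lambda>q. \<psi> (q$1)))"
    and "conformal_killing_form U (coord_metric \<psi>) (\<lambda>p. F1 (p$1) *\<^sub>R dform (\<lambda>q. F2 (q$1)) p)"
    and "non_null U (coord_metric \<psi>) (\<lambda>p. F1 (p$1) *\<^sub>R dform (\<lambda>q. F2 (q$1)) p)"
  shows "\<exists>k::real. \<forall>p\<in>U. F1 (p$1) *\<^sub>R dform (\<lambda>q. F2 (q$1)) p = k *\<^sub>R dform (\<lambda>q. \<psi> (q$1)) p"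
proof -
  have x_in: "p$1 \<in> (\<lambda>p. p$1) ` U" if "p \<in> U" for p
    using that by blast
  note diff = smooth_real_on_imp_differentiable[OF _ x_in]
    smooth_real_on_imp_deriv_differentiable[OF _ x_in]
  have d\<psi>: "\<forall>p\<in>U. dform (\<lambda>q. \<psi> (q$1)) p = (\<chi> i. if i = 1 then deriv \<psi> (p$1) else 0)"
    using diff(1)[OF assms(3)] by (simp add: dform_first_coord)
  have \<omega>: "\<forall>p\<in>U. F1 (p$1) *\<^sub>R dform (\<lambda>q. F2 (q$1)) p
                  = (\<chi> i. if i = 1 then F1 (p$1) * deriv F2 (p$1) else 0)"
    using diff(1)[OF assms(5)] by (simp add: dform_first_coord vec_eq_iff)
  have w_diff: "\<forall>p\<in>U. (\<lambda>x. F1 x * deriv F2 x) differentiable (at (p$1))"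
    using diff(1)[OF assms(4)] diff(2)[OF assms(5)] by (auto intro!: differentiable_mult)
  obtain k where k: "\<forall>p\<in>U. F1 (p$1) * deriv F2 (p$1) = k * deriv \<psi> (p$1)"
    using conformal_killing_first_coord_form_proportional[where w = "\<lambda>x. F1 x * deriv F2 x",
        OF assms(1,2,6) _ w_diff \<omega> assms(9)] diff(2)[OF assms(3)]
    by blast
  show ?thesis
  proof (intro exI ballI)
    fix p assume "p \<in> U"
    then show "F1 (p$1) *\<^sub>R dform (\<lambda>q. F2 (q$1)) p = k *\<^sub>R dform (\<lambda>q. \<psi> (q$1)) p"
      using k d\<psi> \<omega> by (simp add: vec_eq_iff forall_2)
  qed
qed

end
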